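(* Fix integers $T,C,K\ge 1$, lengths $T_2,\dots,T_K\ge 1$, and the following data. (a) A linear map $W_\theta:\mathbb{R}^{T\times C}\to\mathbb{R}^{N}$ (a short-time Fourier transform) with constants $0<A\le B<\infty$ such that $\sqrt{A}\|\bm Y\|_2\le\|W_\theta(\bm Y)\|_2\le\sqrt{B}\|\bm Y\|_2$ for all $\bm Y\in\mathbb{R}^{T\times C}$. (b) For each $k=2,\dots,K$ a fixed linear upsampling operator $\operatorname{Up}_T:\mathbb{R}^{T_k}\to\mathbb{R}^{T}$. (c) A moving-average smoother $\mathrm{MA}_\kappa:\mathbb{R}^T\to\mathbb{R}^T$ of the form $(\mathrm{MA}_\kappa u)(t)=\sum_{s\in\mathcal W_t} w_{t,s}u(s)$, where $\mathcal W_t\subseteq\{1,\dots,T\}$ is the averaging window of $t$ and the weights satisfy $w_{t,s}\ge 0$, $\sum_{s\in\mathcal W_t}w_{t,s}=1$; assume moreover there is $\rho_\kappa\ge 1$ with $\langle(\mathrm{MA}_\kappa u)(t)\rangle_t\le\rho_\kappa\langle u(t)\rangle_t$ for every nonnegative sequence $u$. (d) Nonnegative score weights $\alpha_f,\alpha_t,\alpha_g,\alpha_c,\alpha_{\mathrm{cyc}},\alpha_{\mathrm{ms}}$ and positive loss weights $\omega_2,\dots,\omega_K,\omega_{\mathrm{full}}$ with $\sum_{k=2}^K\omega_k+\omega_{\mathrm{full}}=1$. For arrays $\bm X,\hat{\bm X},\hat{\bm X}_{\leftarrow f},\hat{\bm X}_{\mathrm{ms}}\in\mathbb{R}^{T\times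 C}$, arrays $\bm X^{(k)},\hat{\bm X}^{(k)}_{\mathrm{ms}}\in\mathbb{R}^{T_k\times C}$ ($k=2,\dots,K$) and a real sequence $g(t)$, $t=1,\dots,T$, put $\bm S=W_\theta(\bm X)$, $\hat{\bm S}_{\rightarrow f}=W_\theta(\hat{\bm X})$, $c(t)=|\hat{\bm X}_{\mathrm{ms}}(t)-\hat{\bm X}_{\leftarrow f}(t)|$ and \[ \mathcal{L}_{\mathrm{ms}}=\sum_{k=2}^K\omega_k\,l(\hat{\bm X}^{(k)}_{\mathrm{ms}},\bm X^{(k)})+\omega_{\mathrm{full}}\,l(\hat{\bm X}_{\mathrm{ms}},\bm X),\quad \mathcal{L}_{\mathrm{cyc}}=l(\hat{\bm S}_{\rightarrow f},\bm S)+l(\hat{\bm X}_{\leftarrow f},\bm X),\quad \mathcal{L}_{\mathrm{cons}}=l(\hat{\bm X}_{\mathrm{ms}},\hat{\bm X}_{\leftarrow f}), \] \[ \tilde{\mathcal A}_{\mathrm{cyc}}(t)=\alpha_f|\hat{\bm X}_{\leftarrow f}(t)-\bm X(t)|+\alpha_t|\hat{\bm X}(t)-\bm X(t)|+\alpha_g|g(t)|+\alpha_c c(t),\qquad \mathcal A_{\mathrm{cyc}}=\mathrm{MA}_\kappa(\tilde{\mathcal A}_{\mathrm{cyc}}), \] \[ \mathcal A_{\mathrm{ms}}(t)=|\hat{\bm X}_{\mathrm{ms}}(t)-\bm X(t)|+\sum_{k=2}^K\operatorname{Up}_T\big(|\hat{\bm X}^{(k)}_{\mathrm{ms}}-\bm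 X^{(k)}|\big)(t),\qquad \mathcal A(t)=\alpha_{\mathrm{cyc}}\mathcal A_{\mathrm{cyc}}(t)+\alpha_{\mathrm{ms}}\mathcal A_{\mathrm{ms}}(t). \] Then: (1) There exist constants $\kappa_{\mathrm{ms}},\kappa_{\mathrm{cyc}},\kappa_{\mathrm{cons}},\kappa_g,\kappa_0\ge 0$, not depending on the arrays $\bm X,\hat{\bm X},\hat{\bm X}_{\leftarrow f},\hat{\bm X}_{\mathrm{ms}},\bm X^{(k)},\hat{\bm X}^{(k)}_{\mathrm{ms}}$ or on $g$ (only on the fixed weights, dimensions and scales, operators, and $\rho_\kappa$), such that whenever $\mathcal L_{\mathrm{ms}}\le\varepsilon_{\mathrm{ms}}$, $\mathcal L_{\mathrm{cyc}}\le\varepsilon_{\mathrm{cyc}}$ and $\mathcal L_{\mathrm{cons}}\le\varepsilon_{\mathrm{cons}}$, \[ \langle\mathcal A(t)\rangle_t\le\kappa_{\mathrm{ms}}\varepsilon_{\mathrm{ms}}+\rho_\kappa\kappa_{\mathrm{cyc}}\varepsilon_{\mathrm{cyc}}+\rho_\kappa\kappa_{\mathrm{cons}}\varepsilon_{\mathrm{cons}}+\rho_\kappa\kappa_g\alpha_g\langle|g(t)|\rangle_t+\kappa_0 . \] (2) Let $\Omega\subseteq\{1,\dots,T\}$ be nonempty. If $\langle|\hat{\bm X}(t)-\bm X(t)|\rangle_{t\in\Omega}\ge\delta_t$, $\langle|\hat{\bm X}_{\leftarrow f}(t)-\bm X(t)|\rangle_{t\in\Omega}\ge\delta_f$ and $\langle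 c(t)\rangle_{t\in\Omega}\ge\delta_c$, then $\langle\tilde{\mathcal A}_{\mathrm{cyc}}(t)\rangle_{t\in\Omega}\ge\alpha_t\delta_t+\alpha_f\delta_f+\alpha_c\delta_c$. (3) If moreover $|\hat{\bm X}(t)-\bm X(t)|\ge\delta_t$, $|\hat{\bm X}_{\leftarrow f}(t)-\bm X(t)|\ge\delta_f$ and $c(t)\ge\delta_c$ for all $t\in\Omega$, then for every $t\in\Omega$ with $\mathcal W_t\subseteq\Omega$ one has $\mathcal A_{\mathrm{cyc}}(t)\ge\alpha_t\delta_t+\alpha_f\delta_f+\alpha_c\delta_c$. (4) If $\bm p_t(t),\tilde{\bm p}_f(t)$ ($t\in\Omega$) are probability vectors on a common finite set with $\|\bm p_t(t)-\tilde{\bm p}_f(t)\|_1\ge\delta_p$ for all $t\in\Omega$, then $d(t)=\mathrm{JS}(\bm p_t(t),\tilde{\bm p}_f(t))$ satisfies $\langle d(t)\rangle_{t\in\Omega}\ge\frac18\delta_p^2$.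
   Context: $\|\cdot\|_2$ is the Euclidean (Frobenius) norm of an array. For an array $\bm Y$ with rows indexed by time, $|\bm Y(t)|$ denotes the sum of absolute values of the entries in row $t$ (a nonnegative scalar per timestamp); $|\hat{\bm X}^{(k)}_{\mathrm{ms}}-\bm X^{(k)}|$ is the resulting length-$T_k$ sequence. $\langle u(t)\rangle_t=\frac1T\sum_{t=1}^T u(t)$ and $\langle u(t)\rangle_{t\in\Omega}=\frac1{|\Omega|}\sum_{t\in\Omega}u(t)$. The loss $l(\hat{\bm Y},\bm Y)$ is the mean over all entries of the SmoothL1 (Huber) function $\psi(r)=\tfrac12 r^2$ if $|r|<1$ and $\psi(r)=|r|-\tfrac12$ otherwise, applied to the entrywise difference $r=\hat Y-Y$. $\mathrm{JS}(p,q)=\tfrac12\mathrm{KL}(p\|m)+\tfrac12\mathrm{KL}(q\|m)$ with $m=\tfrac12(p+q)$ is the Jensen–Shannon divergence (natural logarithm). In the paper $\hat{\bm X}$ is the time-domain decoder output, $\hat{\bm X}_{\leftarrow f}$ the inverse-STFT of the predicted spectrum, $\hat{\bm X}_{\mathrm{ms}}$ the multi-scale reconstruction, $\bm X^{(k)}$ the band-limited downsampled scales, and $g(t)$ an uncertainty gate; the lemma holds for arbitrary such arrays. *)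

theory Defs
  imports Complex_Main
begin

text \<open>Time indices range over {1..T}, channel indices over {1..C},
  scale indices over {2..K}, spectral coefficients over {1..N}.
  Arrays in R^(T x C) are functions nat => nat => real (time, channel);
  only their values on the index box matter. Linear maps between finite-dimensional
  coordinate spaces are given by their coefficient matrices.\<close>

definition huber :: "real \<Rightarrow> real" where
  "huber r = (if \<bar>r\<bar> < 1 then r\<^sup>2 / 2 else \<bar>r\<bar> - 1/2)"

text \<open>SmoothL1 loss l(Yhat, Y): mean over all entries of huber(Yhat - Y).\<close>
definition loss_arr :: "nat \<Rightarrow> nat \<Rightarrow> (nat \<Rightarrow> nat \<Rightarrow> real) \<Rightarrow> (nat \<Rightarrow> nat \<Rightarrow> real) \<Rightarrow> real" where
  "loss_arr T C Yh Y = (\<Sum>t\<in>{1..T}. \<Sum>c\<in>{1..C}. huber (Yh t c - Y t c)) / real (T * C)"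

definition loss_vec :: "nat \<Rightarrow> (nat \<Rightarrow> real) \<Rightarrow> (nat \<Rightarrow> real) \<Rightarrow> real" where
  "loss_vec N vh v = (\<Sum>n\<in>{1..N}. huber (vh n - v n)) / real N"

definition frob :: "nat \<Rightarrow> nat \<Rightarrow> (nat \<Rightarrow> nat \<Rightarrow> real) \<Rightarrow> real" where
  "frob T C Y = sqrt (\<Sum>t\<in>{1..T}. \<Sum>c\<in>{1..C}. (Y t c)\<^sup>2)"

definition vnorm :: "nat \<Rightarrow> (nat \<Rightarrow> real) \<Rightarrow> real" where
  "vnorm N v = sqrt (\<Sum>n\<in>{1..N}. (v n)\<^sup>2)"

definition lin_map :: "(nat \<Rightarrow> nat \<Rightarrow> nat \<Rightarrow> real) \<Rightarrow> nat \<Rightarrow> nat \<Rightarrow> (nat \<Rightarrow> nat \<Rightarrow> real) \<Rightarrow> nat \<Rightarrow> real" where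
  "lin_map Wc T C Y n = (\<Sum>t\<in>{1..T}. \<Sum>c\<in>{1..C}. Wc n t c * Y t c)"

definition upsample :: "(nat \<Rightarrow> nat \<Rightarrow> real) \<Rightarrow> nat \<Rightarrow> (nat \<Rightarrow> real) \<Rightarrow> nat \<Rightarrow> real" where
  "upsample U Tk u t = (\<Sum>s\<in>{1..Tk}. U t s * u s)"

definition mov_avg :: "(nat \<Rightarrow> nat set) \<Rightarrow> (nat \<Rightarrow> nat \<Rightarrow> real) \<Rightarrow> (nat \<Rightarrow> real) \<Rightarrow> nat \<Rightarrow> real" where
  "mov_avg Win w u t = (\<Sum>s\<in>Win t. w t s * u s)"

definition arr_diff :: "(nat \<Rightarrow> nat \<Rightarrow> real) \<Rightarrow> (nat \<Rightarrow> nat \<Rightarrow> real) \<Rightarrow> nat \<Rightarrow> nat \<Rightarrow> real" where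
  "arr_diff Y Z = (\<lambda>t c. Y t c - Z t c)"

text \<open>|Y(t)|: sum of absolute values of the entries of row t.\<close>
definition row_abs :: "nat \<Rightarrow> (nat \<Rightarrow> nat \<Rightarrow> real) \<Rightarrow> nat \<Rightarrow> real" where
  "row_abs C Y t = (\<Sum>c\<in>{1..C}. \<bar>Y t c\<bar>)"

definition avg :: "nat \<Rightarrow> (nat \<Rightarrow> real) \<Rightarrow> real" where
  "avg T u = (\<Sum>t\<in>{1..T}. u t) / real T"

definition avg_on :: "nat set \<Rightarrow> (nat \<Rightarrow> real) \<Rightarrow> real" where
  "avg_on \<Omega> u = (\<Sum>t\<in>\<Omega>. u t) / real (card \<Omega>)"

definition L_ms :: "nat \<Rightarrow> nat \<Rightarrow> nat \<Rightarrow> (nat \<Rightarrow> nat) \<Rightarrow> (nat \<Rightarrow> real) \<Rightarrow> real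
    \<Rightarrow> (nat \<Rightarrow> nat \<Rightarrow> real) \<Rightarrow> (nat \<Rightarrow> nat \<Rightarrow> real)
    \<Rightarrow> (nat \<Rightarrow> nat \<Rightarrow> nat \<Rightarrow> real) \<Rightarrow> (nat \<Rightarrow> nat \<Rightarrow> nat \<Rightarrow> real) \<Rightarrow> real" where
  "L_ms T C K Tk \<omega> \<omega>full X Xms Xk Xmsk =
     (\<Sum>k\<in>{2..K}. \<omega> k * loss_arr (Tk k) C (Xmsk k) (Xk k)) + \<omega>full * loss_arr T C Xms X"

definition L_cyc :: "nat \<Rightarrow> nat \<Rightarrow> nat \<Rightarrow> (nat \<Rightarrow> nat \<Rightarrow> nat \<Rightarrow> real)
    \<Rightarrow> (nat \<Rightarrow> nat \<Rightarrow> real) \<Rightarrow> (nat \<Rightarrow> nat \<Rightarrow> real) \<Rightarrow> (nat \<Rightarrow> nat \<Rightarrow> real) \<Rightarrow> real" where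
  "L_cyc T C N Wc X Xh Xf =
     loss_vec N (lin_map Wc T C Xh) (lin_map Wc T C X) + loss_arr T C Xf X"

definition L_cons :: "nat \<Rightarrow> nat \<Rightarrow> (nat \<Rightarrow> nat \<Rightarrow> real) \<Rightarrow> (nat \<Rightarrow> nat \<Rightarrow> real) \<Rightarrow> real" where
  "L_cons T C Xms Xf = loss_arr T C Xms Xf"

definition A_tilde_cyc :: "nat \<Rightarrow> real \<Rightarrow> real \<Rightarrow> real \<Rightarrow> real
    \<Rightarrow> (nat \<Rightarrow> nat \<Rightarrow> real) \<Rightarrow> (nat \<Rightarrow> nat \<Rightarrow> real) \<Rightarrow> (nat \<Rightarrow> nat \<Rightarrow> real) \<Rightarrow> (nat \<Rightarrow> nat \<Rightarrow> real)
    \<Rightarrow> (nat \<Rightarrow> real) \<Rightarrow> nat \<Rightarrow> real" where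
  "A_tilde_cyc C \<alpha>f \<alpha>t \<alpha>g \<alpha>c X Xh Xf Xms g t =
     \<alpha>f * row_abs C (arr_diff Xf X) t + \<alpha>t * row_abs C (arr_diff Xh X) t
     + \<alpha>g * \<bar>g t\<bar> + \<alpha>c * row_abs C (arr_diff Xms Xf) t"

definition A_ms :: "nat \<Rightarrow> nat \<Rightarrow> (nat \<Rightarrow> nat \<Rightarrow> nat \<Rightarrow> real) \<Rightarrow> (nat \<Rightarrow> nat)
    \<Rightarrow> (nat \<Rightarrow> nat \<Rightarrow> real) \<Rightarrow> (nat \<Rightarrow> nat \<Rightarrow> real)
    \<Rightarrow> (nat \<Rightarrow> nat \<Rightarrow> nat \<Rightarrow> real) \<Rightarrow> (nat \<Rightarrow> nat \<Rightarrow> nat \<Rightarrow> real) \<Rightarrow> nat \<Rightarrow> real" where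
  "A_ms C K U Tk X Xms Xk Xmsk t =
     row_abs C (arr_diff Xms X) t
     + (\<Sum>k\<in>{2..K}. upsample (U k) (Tk k) (row_abs C (arr_diff (Xmsk k) (Xk k))) t)"

definition prob_vec :: "'a set \<Rightarrow> ('a \<Rightarrow> real) \<Rightarrow> bool" where
  "prob_vec S p \<longleftrightarrow> (\<forall>x\<in>S. 0 \<le> p x) \<and> (\<Sum>x\<in>S. p x) = 1"

definition KL :: "'a set \<Rightarrow> ('a \<Rightarrow> real) \<Rightarrow> ('a \<Rightarrow> real) \<Rightarrow> real" where
  "KL S p q = (\<Sum>x\<in>S. if p x = 0 then 0 else p x * ln (p x / q x))"

definition JS :: "'a set \<Rightarrow> ('a \<Rightarrow> real) \<Rightarrow> ('a \<Rightarrow> real) \<Rightarrow> real" where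
  "JS S p q = (let m = (\<lambda>x. (p x + q x) / 2) in KL S p m / 2 + KL S q m / 2)"

definition l1dist :: "'a set \<Rightarrow> ('a \<Rightarrow> real) \<Rightarrow> ('a \<Rightarrow> real) \<Rightarrow> real" where
  "l1dist S p q = (\<Sum>x\<in>S. \<bar>p x - q x\<bar>)"

end

theory Submission
  imports Defs "HOL-Analysis.L2_Norm" "HOL-Analysis.Convex"
begin

text \<open>Since \<open>\<bar>r\<bar> \<le> \<psi>(r) + 1/2\<close>, every score averaged over time is bounded by a
  dimension-dependent multiple of the matching SmoothL1 loss plus a constant; the spectral
  term passes through the lower frame bound, the moving average costs the factor \<open>\<rho>\<close>, and
  upsampling costs the entrywise \<open>\<ell>\<^sub>1\<close> mass of its matrix.  The lower bounds on windows
  are monotonicity of nonnegative combinations, and the Jensen-Shannon bound follows from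
  Cauchy-Schwarz together with the pointwise estimate
  \<open>a ln (2a/(a+b)) + b ln (2b/(a+b)) \<ge> (a-b)\<^sup>2/(2(a+b))\<close>.\<close>

lemma huber_nonneg: "0 \<le> huber r"
  unfolding huber_def by auto

lemma abs_le_huber: "\<bar>r\<bar> \<le> huber r + 1/2"
proof (cases "\<bar>r\<bar> < 1")
  case True
  have "0 \<le> (\<bar>r\<bar> - 1)\<^sup>2" by simp
  then show ?thesis using True unfolding huber_def by (simp add: power2_diff)
qed (simp add: huber_def)

lemma loss_arr_nonneg: "0 \<le> loss_arr T C Y Z"
  unfolding loss_arr_def by (simp add: sum_nonneg huber_nonneg)

lemma loss_vec_nonneg: "0 \<le> loss_vec N vh v"
  unfolding loss_vec_def by (simp add: sum_nonneg huber_nonneg)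

lemma row_abs_nonneg: "0 \<le> row_abs C Y t"
  unfolding row_abs_def by (simp add: sum_nonneg)

lemma avg_eq_avg_on: "avg T u = avg_on {1..T} u"
  unfolding avg_def avg_on_def by simp

lemma avg_on_add: "avg_on \<Omega> (\<lambda>t. u t + v t) = avg_on \<Omega> u + avg_on \<Omega> v"
  unfolding avg_on_def by (simp add: sum.distrib add_divide_distrib)

lemma avg_on_cmult: "avg_on \<Omega> (\<lambda>t. a * u t) = a * avg_on \<Omega> u"
  unfolding avg_on_def by (simp add: sum_distrib_left[symmetric])

lemma avg_on_sum: "avg_on \<Omega> (\<lambda>t. \<Sum>k\<in>I. u k t) = (\<Sum>k\<in>I. avg_on \<Omega> (u k))"
  unfolding avg_on_def by (simp add: sum.swap[of _ I] sum_divide_distrib)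

lemma avg_on_nonneg: "(\<And>t. t \<in> \<Omega> \<Longrightarrow> 0 \<le> u t) \<Longrightarrow> 0 \<le> avg_on \<Omega> u"
  unfolding avg_on_def by (simp add: sum_nonneg)

lemma avg_on_ge_const:
  assumes "finite \<Omega>" "\<Omega> \<noteq> {}" "\<And>t. t \<in> \<Omega> \<Longrightarrow> a \<le> u t"
  shows "a \<le> avg_on \<Omega> u"
proof -
  have "real (card \<Omega>) * a \<le> (\<Sum>t\<in>\<Omega>. u t)"
    using sum_mono[of \<Omega> "\<lambda>_. a" u] assms(3) by simp
  moreover have "0 < real (card \<Omega>)" using assms(1,2) by (simp add: card_gt_0_iff)
  ultimately show ?thesis unfolding avg_on_def by (simp add: le_divide_eq mult.commute)
qed

lemma mov_avg_ge:
  assumes "\<And>s. s \<in> Win t \<Longrightarrow> 0 \<le> w t s" "(\<Sum>s\<in>Win t. w t s) = 1"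
    and "\<And>s. s \<in> Win t \<Longrightarrow> a \<le> u s"
  shows "a \<le> mov_avg Win w u t"
proof -
  have "a = (\<Sum>s\<in>Win t. w t s * a)" using assms(2) by (simp add: sum_distrib_right[symmetric])
  also have "\<dots> \<le> (\<Sum>s\<in>Win t. w t s * u s)" using assms(1,3) by (intro sum_mono mult_left_mono)
  finally show ?thesis unfolding mov_avg_def .
qed

subsection \<open>Scores bounded by losses\<close>

lemma sum_row_abs_le_loss_arr:
  "(\<Sum>t\<in>{1..T}. row_abs C (arr_diff Y Z) t) \<le> real (T * C) * (loss_arr T C Y Z + 1/2)"
proof -
  let ?H = "\<Sum>t\<in>{1..T}. \<Sum>c\<in>{1..C}. huber (Y t c - Z t c)"
  have "(\<Sum>t\<in>{1..T}. row_abs C (arr_diff Y Z) t) \<le> (\<Sum>t\<in>{1..T}. \<Sum>c\<in>{1..C}. huber (Y t c - Z t c) + 1/2)"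
    unfolding row_abs_def arr_diff_def by (intro sum_mono abs_le_huber)
  also have "\<dots> = ?H + real (T * C) / 2"
    by (simp add: sum.distrib)
  also have "?H = real (T * C) * loss_arr T C Y Z"
    unfolding loss_arr_def by (cases "T = 0 \<or> C = 0") auto
  finally show ?thesis by (simp add: distrib_left)
qed

lemma avg_row_abs_le_loss_arr:
  assumes "loss_arr T C Y Z \<le> \<epsilon>"
  shows "avg T (row_abs C (arr_diff Y Z)) \<le> real C * (\<epsilon> + 1/2)"
proof (cases "T = 0")
  case False
  have "(\<Sum>t\<in>{1..T}. row_abs C (arr_diff Y Z) t) \<le> real (T * C) * (loss_arr T C Y Z + 1/2)"
    by (rule sum_row_abs_le_loss_arr)
  also have "\<dots> \<le> real T * (real C * (\<epsilon> + 1/2))"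
    using assms by (simp add: mult.assoc mult_left_mono)
  finally show ?thesis using False unfolding avg_def by (simp add: pos_divide_le_eq mult.commute)
next
  case True
  have "0 \<le> \<epsilon>" by (rule order_trans[OF loss_arr_nonneg assms])
  then show ?thesis using True by (simp add: avg_def)
qed

lemma abs_le_frob: "t \<in> {1..T} \<Longrightarrow> c \<in> {1..C} \<Longrightarrow> \<bar>D t c\<bar> \<le> frob T C D"
proof -
  assume "t \<in> {1..T}" "c \<in> {1..C}"
  then have "(D t c)\<^sup>2 \<le> (\<Sum>t\<in>{1..T}. \<Sum>c\<in>{1..C}. (D t c)\<^sup>2)"
    using member_le_sum[where f = "\<lambda>c. (D t c)\<^sup>2" and i = c and A = "{1..C}"]
      member_le_sum[where f = "\<lambda>t. \<Sum>c\<in>{1..C}. (D t c)\<^sup>2" and i = t and A = "{1..T}"]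
    by (simp add: sum_nonneg)
  then show ?thesis unfolding frob_def by (metis real_sqrt_abs real_sqrt_le_mono)
qed

lemma avg_row_abs_le_frob: "avg T (row_abs C D) \<le> real C * frob T C D"
proof -
  have "(\<Sum>t\<in>{1..T}. row_abs C D t) \<le> (\<Sum>t\<in>{1..T}. \<Sum>c\<in>{1..C}. frob T C D)"
    unfolding row_abs_def by (intro sum_mono abs_le_frob)
  then have "(\<Sum>t\<in>{1..T}. row_abs C D t) \<le> real T * (real C * frob T C D)" by simp
  then show ?thesis
    unfolding avg_def by (cases "T = 0") (simp add: frob_def, simp add: divide_le_eq mult.commute)
qed

lemma vnorm_diff_le_loss_vec: "vnorm N (\<lambda>n. vh n - v n) \<le> real N * (loss_vec N vh v + 1/2)"
proof -
  have "vnorm N (\<lambda>n. vh n - v n) \<le> (\<Sum>n\<in>{1..N}. \<bar>vh n - v n\<bar>)"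
    using L2_set_le_sum_abs unfolding vnorm_def L2_set_def .
  also have "\<dots> \<le> (\<Sum>n\<in>{1..N}. huber (vh n - v n) + 1/2)"
    by (intro sum_mono abs_le_huber)
  also have "\<dots> = real N * (loss_vec N vh v + 1/2)"
    unfolding loss_vec_def by (cases "N = 0") (simp_all add: sum.distrib distrib_left)
  finally show ?thesis .
qed

lemma lin_map_arr_diff:
  "lin_map Wc T C (arr_diff Y Z) = (\<lambda>n. lin_map Wc T C Y n - lin_map Wc T C Z n)"
  unfolding lin_map_def arr_diff_def by (simp add: right_diff_distrib sum_subtractf)

lemma frob_diff_le_loss_vec:
  assumes "0 < A" and frame_lower: "\<forall>Y. sqrt A * frob T C Y \<le> vnorm N (lin_map Wc T C Y)"
  shows "frob T C (arr_diff Y Z)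
    \<le> real N * (loss_vec N (lin_map Wc T C Y) (lin_map Wc T C Z) + 1/2) / sqrt A"
proof -
  have "sqrt A * frob T C (arr_diff Y Z)
    \<le> real N * (loss_vec N (lin_map Wc T C Y) (lin_map Wc T C Z) + 1/2)"
    using frame_lower[rule_format, of "arr_diff Y Z"] vnorm_diff_le_loss_vec
    unfolding lin_map_arr_diff by (rule order_trans)
  then show ?thesis using assms(1) by (simp add: le_divide_eq mult.commute)
qed

definition mat_abs_sum :: "(nat \<Rightarrow> nat \<Rightarrow> real) \<Rightarrow> nat \<Rightarrow> nat \<Rightarrow> real" where
  "mat_abs_sum V T Tk = (\<Sum>t\<in>{1..T}. \<Sum>s\<in>{1..Tk}. \<bar>V t s\<bar>)"

lemma mat_abs_sum_nonneg: "0 \<le> mat_abs_sum V T Tk"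
  unfolding mat_abs_sum_def by (simp add: sum_nonneg)

lemma avg_upsample_le:
  assumes "\<And>s. s \<in> {1..Tk} \<Longrightarrow> 0 \<le> r s"
  shows "avg T (upsample V Tk r) \<le> mat_abs_sum V T Tk * (\<Sum>s\<in>{1..Tk}. r s)"
proof -
  let ?R = "\<Sum>s\<in>{1..Tk}. r s" and ?M = "mat_abs_sum V T Tk"
  have entry: "V t s * r s \<le> \<bar>V t s\<bar> * ?R" if "s \<in> {1..Tk}" for t s
  proof -
    have "V t s * r s \<le> \<bar>V t s\<bar> * r s" using assms that by (intro mult_right_mono) auto
    also have "\<dots> \<le> \<bar>V t s\<bar> * ?R"
      using assms that by (intro mult_left_mono member_le_sum) auto
    finally show ?thesis .
  qed
  have "(\<Sum>t\<in>{1..T}. upsample V Tk r t) \<le> (\<Sum>t\<in>{1..T}. \<Sum>s\<in>{1..Tk}. \<bar>V t s\<bar> * ?R)"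
    unfolding upsample_def by (intro sum_mono entry)
  also have "\<dots> = ?M * ?R" by (simp add: mat_abs_sum_def sum_distrib_right)
  finally have sum_le: "(\<Sum>t\<in>{1..T}. upsample V Tk r t) \<le> ?M * ?R" .
  have M_nonneg: "0 \<le> ?M * ?R"
    using assms by (intro mult_nonneg_nonneg mat_abs_sum_nonneg sum_nonneg) auto
  show ?thesis
  proof (cases "T = 0")
    case False
    then have "?M * ?R \<le> real T * (?M * ?R)"
      using mult_right_mono[OF _ M_nonneg, of 1 "real T"] by simp
    then show ?thesis using sum_le False unfolding avg_def by (simp add: pos_divide_le_eq mult.commute)
  qed (use M_nonneg in \<open>simp add: avg_def\<close>)
qed

lemma A_tilde_cyc_nonneg:
  assumes "0 \<le> \<alpha>f" "0 \<le> \<alpha>t" "0 \<le> \<alpha>g" "0 \<le> \<alpha>c"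
  shows "0 \<le> A_tilde_cyc C \<alpha>f \<alpha>t \<alpha>g \<alpha>c X Xh Xf Xms g t"
  unfolding A_tilde_cyc_def using assms by (simp add: row_abs_nonneg)

lemma avg_on_A_tilde_cyc:
  "avg_on \<Omega> (A_tilde_cyc C \<alpha>f \<alpha>t \<alpha>g \<alpha>c X Xh Xf Xms g)
    = \<alpha>f * avg_on \<Omega> (row_abs C (arr_diff Xf X)) + \<alpha>t * avg_on \<Omega> (row_abs C (arr_diff Xh X))
      + \<alpha>g * avg_on \<Omega> (\<lambda>t. \<bar>g t\<bar>) + \<alpha>c * avg_on \<Omega> (row_abs C (arr_diff Xms Xf))"
  unfolding A_tilde_cyc_def[abs_def] avg_on_add avg_on_cmult ..

lemma avg_A_tilde_cyc_le:
  assumes "0 < A" and frame_lower: "\<forall>Y. sqrt A * frob T C Y \<le> vnorm N (lin_map Wc T C Y)"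
    and "0 \<le> \<alpha>f" "0 \<le> \<alpha>t" "0 \<le> \<alpha>g" "0 \<le> \<alpha>c"
    and "L_cyc T C N Wc X Xh Xf \<le> \<epsilon>cyc" "L_cons T C Xms Xf \<le> \<epsilon>cons"
  shows "avg T (A_tilde_cyc C \<alpha>f \<alpha>t \<alpha>g \<alpha>c X Xh Xf Xms g)
    \<le> (\<alpha>f * real C + \<alpha>t * real C * real N / sqrt A) * (\<epsilon>cyc + 1/2)
       + \<alpha>c * real C * (\<epsilon>cons + 1/2) + \<alpha>g * avg T (\<lambda>t. \<bar>g t\<bar>)"
proof -
  have spectral: "loss_vec N (lin_map Wc T C Xh) (lin_map Wc T C X) \<le> \<epsilon>cyc"
    and inverse: "loss_arr T C Xf X \<le> \<epsilon>cyc"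
    using assms(7) loss_vec_nonneg[of N "lin_map Wc T C Xh" "lin_map Wc T C X"]
      loss_arr_nonneg[of T C Xf X]
    unfolding L_cyc_def by linarith+
  have "avg T (row_abs C (arr_diff Xh X)) \<le> real C * frob T C (arr_diff Xh X)"
    by (rule avg_row_abs_le_frob)
  also have "\<dots> \<le> real C * (real N * (\<epsilon>cyc + 1/2) / sqrt A)"
  proof -
    have "real N * (loss_vec N (lin_map Wc T C Xh) (lin_map Wc T C X) + 1/2) / sqrt A
      \<le> real N * (\<epsilon>cyc + 1/2) / sqrt A"
      using spectral assms(1) by (intro divide_right_mono mult_left_mono) auto
    then show ?thesis
      using frob_diff_le_loss_vec[OF assms(1) frame_lower, of Xh X] by (intro mult_left_mono) auto
  qed
  finally have time: "avg T (row_abs C (arr_diff Xh X)) \<le> real C * real N / sqrt A * (\<epsilon>cyc + 1/2)"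
    by simp
  have freq: "avg T (row_abs C (arr_diff Xf X)) \<le> real C * (\<epsilon>cyc + 1/2)"
    using inverse by (rule avg_row_abs_le_loss_arr)
  have cons: "avg T (row_abs C (arr_diff Xms Xf)) \<le> real C * (\<epsilon>cons + 1/2)"
    using assms(8) unfolding L_cons_def by (rule avg_row_abs_le_loss_arr)
  have "avg T (A_tilde_cyc C \<alpha>f \<alpha>t \<alpha>g \<alpha>c X Xh Xf Xms g)
    \<le> \<alpha>f * (real C * (\<epsilon>cyc + 1/2)) + \<alpha>t * (real C * real N / sqrt A * (\<epsilon>cyc + 1/2))
       + \<alpha>g * avg T (\<lambda>t. \<bar>g t\<bar>) + \<alpha>c * (real C * (\<epsilon>cons + 1/2))"
    unfolding avg_eq_avg_on avg_on_A_tilde_cyc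
    using time freq cons assms(3-6) unfolding avg_eq_avg_on
    by (intro add_mono mult_left_mono order_refl)
  then show ?thesis by (simp add: algebra_simps)
qed

lemma L_ms_ge_full:
  assumes "\<forall>k\<in>{2..K}. 0 \<le> \<omega> k"
  shows "\<omega>full * loss_arr T C Xms X \<le> L_ms T C K Tk \<omega> \<omega>full X Xms Xk Xmsk"
proof -
  have "0 \<le> (\<Sum>k\<in>{2..K}. \<omega> k * loss_arr (Tk k) C (Xmsk k) (Xk k))"
    using assms by (intro sum_nonneg mult_nonneg_nonneg loss_arr_nonneg) auto
  then show ?thesis unfolding L_ms_def by simp
qed

lemma L_ms_ge_scale:
  assumes "\<forall>k\<in>{2..K}. 0 \<le> \<omega> k" "0 \<le> \<omega>full" "k \<in> {2..K}"
  shows "\<omega> k * loss_arr (Tk k) C (Xmsk k) (Xk k) \<le> L_ms T C K Tk \<omega> \<omega>full X Xms Xk Xmsk"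
proof -
  have "\<omega> k * loss_arr (Tk k) C (Xmsk k) (Xk k) \<le> (\<Sum>k\<in>{2..K}. \<omega> k * loss_arr (Tk k) C (Xmsk k) (Xk k))"
    using assms by (intro member_le_sum) (auto simp: loss_arr_nonneg)
  then show ?thesis unfolding L_ms_def using assms(2) by (simp add: add_increasing2 loss_arr_nonneg)
qed

lemma avg_A_ms_le:
  assumes \<omega>pos: "\<forall>k\<in>{2..K}. 0 < \<omega> k" "0 < \<omega>full"
    and Lms: "L_ms T C K Tk \<omega> \<omega>full X Xms Xk Xmsk \<le> \<epsilon>ms"
  shows "avg T (A_ms C K U Tk X Xms Xk Xmsk)
    \<le> real C * (\<epsilon>ms / \<omega>full + 1/2)
       + (\<Sum>k\<in>{2..K}. mat_abs_sum (U k) T (Tk k) * real (Tk k * C) * (\<epsilon>ms / \<omega> k + 1/2))"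
proof -
  have \<omega>nn: "\<forall>k\<in>{2..K}. 0 \<le> \<omega> k" using \<omega>pos(1) by (simp add: less_imp_le)
  have full: "avg T (row_abs C (arr_diff Xms X)) \<le> real C * (\<epsilon>ms / \<omega>full + 1/2)"
  proof -
    have "loss_arr T C Xms X \<le> \<epsilon>ms / \<omega>full"
      using order_trans[OF L_ms_ge_full[OF \<omega>nn] Lms] \<omega>pos(2)
      by (simp add: le_divide_eq mult.commute)
    then show ?thesis by (rule avg_row_abs_le_loss_arr)
  qed
  have scale: "avg T (upsample (U k) (Tk k) (row_abs C (arr_diff (Xmsk k) (Xk k))))
    \<le> mat_abs_sum (U k) T (Tk k) * real (Tk k * C) * (\<epsilon>ms / \<omega> k + 1/2)" if k: "k \<in> {2..K}" for k
  proof -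
    have loss_le: "loss_arr (Tk k) C (Xmsk k) (Xk k) \<le> \<epsilon>ms / \<omega> k"
      using order_trans[OF L_ms_ge_scale[OF \<omega>nn less_imp_le[OF \<omega>pos(2)] k] Lms] \<omega>pos(1) k
      by (simp add: le_divide_eq mult.commute)
    have "avg T (upsample (U k) (Tk k) (row_abs C (arr_diff (Xmsk k) (Xk k))))
      \<le> mat_abs_sum (U k) T (Tk k) * (\<Sum>s\<in>{1..Tk k}. row_abs C (arr_diff (Xmsk k) (Xk k)) s)"
      by (intro avg_upsample_le row_abs_nonneg)
    also have "\<dots> \<le> mat_abs_sum (U k) T (Tk k) * (real (Tk k * C) * (loss_arr (Tk k) C (Xmsk k) (Xk k) + 1/2))"
      by (intro mult_left_mono sum_row_abs_le_loss_arr mat_abs_sum_nonneg)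
    also have "\<dots> \<le> mat_abs_sum (U k) T (Tk k) * (real (Tk k * C) * (\<epsilon>ms / \<omega> k + 1/2))"
      using loss_le by (intro mult_left_mono add_right_mono mat_abs_sum_nonneg) auto
    finally show ?thesis by (simp add: mult.assoc)
  qed
  show ?thesis
    unfolding A_ms_def[abs_def] avg_eq_avg_on avg_on_add avg_on_sum
    using full scale unfolding avg_eq_avg_on by (intro add_mono sum_mono)
qed

lemma avg_score_le:
  fixes T C K N :: nat
  assumes "0 < A" and frame_lower: "\<forall>Y. sqrt A * frob T C Y \<le> vnorm N (lin_map Wc T C Y)"
    and \<rho>: "\<forall>u. (\<forall>t\<in>{1..T}. 0 \<le> u t) \<longrightarrow> avg T (mov_avg Win w u) \<le> \<rho> * avg T u"
    and "0 \<le> \<rho>"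
    and \<alpha>nn: "0 \<le> \<alpha>f" "0 \<le> \<alpha>t" "0 \<le> \<alpha>g" "0 \<le> \<alpha>c" "0 \<le> \<alpha>cyc" "0 \<le> \<alpha>ms"
    and \<omega>pos: "\<forall>k\<in>{2..K}. 0 < \<omega> k" "0 < \<omega>full"
    and Lms: "L_ms T C K Tk \<omega> \<omega>full X Xms Xk Xmsk \<le> \<epsilon>ms"
    and Lcyc: "L_cyc T C N Wc X Xh Xf \<le> \<epsilon>cyc"
    and Lcons: "L_cons T C Xms Xf \<le> \<epsilon>cons"
  shows "avg T (\<lambda>t. \<alpha>cyc * mov_avg Win w (A_tilde_cyc C \<alpha>f \<alpha>t \<alpha>g \<alpha>c X Xh Xf Xms g) t
                      + \<alpha>ms * A_ms C K U Tk X Xms Xk Xmsk t)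
    \<le> \<alpha>cyc * (\<rho> * ((\<alpha>f * real C + \<alpha>t * real C * real N / sqrt A) * (\<epsilon>cyc + 1/2)
                    + \<alpha>c * real C * (\<epsilon>cons + 1/2) + \<alpha>g * avg T (\<lambda>t. \<bar>g t\<bar>)))
      + \<alpha>ms * (real C * (\<epsilon>ms / \<omega>full + 1/2)
                + (\<Sum>k\<in>{2..K}. mat_abs_sum (U k) T (Tk k) * real (Tk k * C) * (\<epsilon>ms / \<omega> k + 1/2)))"
proof -
  let ?At = "A_tilde_cyc C \<alpha>f \<alpha>t \<alpha>g \<alpha>c X Xh Xf Xms g"
  have "avg T (mov_avg Win w ?At) \<le> \<rho> * avg T ?At"
    using \<rho> A_tilde_cyc_nonneg[OF \<alpha>nn(1-4)] by blast
  also have "\<dots> \<le> \<rho> * ((\<alpha>f * real C + \<alpha>t * real C * real N / sqrt A) * (\<epsilon>cyc + 1/2)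
                    + \<alpha>c * real C * (\<epsilon>cons + 1/2) + \<alpha>g * avg T (\<lambda>t. \<bar>g t\<bar>))"
    using avg_A_tilde_cyc_le[OF \<open>0 < A\<close> frame_lower \<alpha>nn(1-4) Lcyc Lcons] \<open>0 \<le> \<rho>\<close>
    by (intro mult_left_mono)
  finally have cyc: "avg T (mov_avg Win w ?At) \<le> \<dots>" .
  have "avg T (\<lambda>t. \<alpha>cyc * mov_avg Win w ?At t + \<alpha>ms * A_ms C K U Tk X Xms Xk Xmsk t)
    = \<alpha>cyc * avg T (mov_avg Win w ?At) + \<alpha>ms * avg T (A_ms C K U Tk X Xms Xk Xmsk)"
    unfolding avg_eq_avg_on avg_on_add avg_on_cmult ..
  then show ?thesis
    using cyc avg_A_ms_le[OF \<omega>pos Lms] \<alpha>nn(5,6) by (simp add: add_mono mult_left_mono)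
qed

lemma score_avg_bound:
  fixes T C K N :: nat
  assumes "0 < A" and "\<forall>Y. sqrt A * frob T C Y \<le> vnorm N (lin_map Wc T C Y)"
    and "\<forall>u. (\<forall>t\<in>{1..T}. 0 \<le> u t) \<longrightarrow> avg T (mov_avg Win w u) \<le> \<rho> * avg T u"
    and "0 \<le> \<rho>"
    and \<alpha>nn: "0 \<le> \<alpha>f" "0 \<le> \<alpha>t" "0 \<le> \<alpha>g" "0 \<le> \<alpha>c" "0 \<le> \<alpha>cyc" "0 \<le> \<alpha>ms"
    and \<omega>pos: "\<forall>k\<in>{2..K}. 0 < \<omega> k" "0 < \<omega>full"
  shows "\<exists>\<kappa>ms \<kappa>cyc \<kappa>cons \<kappa>g \<kappa>0 :: real.
        0 \<le> \<kappa>ms \<and> 0 \<le> \<kappa>cyc \<and> 0 \<le> \<kappa>cons \<and> 0 \<le> \<kappa>g \<and> 0 \<le> \<kappa>0 \<and>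
        (\<forall>(X :: nat \<Rightarrow> nat \<Rightarrow> real) Xh Xf Xms (Xk :: nat \<Rightarrow> nat \<Rightarrow> nat \<Rightarrow> real) Xmsk
           (g :: nat \<Rightarrow> real) \<epsilon>ms \<epsilon>cyc \<epsilon>cons.
           L_ms T C K Tk \<omega> \<omega>full X Xms Xk Xmsk \<le> \<epsilon>ms \<and>
           L_cyc T C N Wc X Xh Xf \<le> \<epsilon>cyc \<and>
           L_cons T C Xms Xf \<le> \<epsilon>cons \<longrightarrow>
           avg T (\<lambda>t. \<alpha>cyc * mov_avg Win w (A_tilde_cyc C \<alpha>f \<alpha>t \<alpha>g \<alpha>c X Xh Xf Xms g) t
                      + \<alpha>ms * A_ms C K U Tk X Xms Xk Xmsk t)
             \<le> \<kappa>ms * \<epsilon>ms + \<rho> * \<kappa>cyc * \<epsilon>cyc + \<rho> * \<kappa>cons * \<epsilon>cons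
                + \<rho> * \<kappa>g * \<alpha>g * avg T (\<lambda>t. \<bar>g t\<bar>) + \<kappa>0)"
proof -
  define M where "M k = mat_abs_sum (U k) T (Tk k) * real (Tk k * C)" for k
  define c_cyc where "c_cyc = \<alpha>f * real C + \<alpha>t * real C * real N / sqrt A"
  define \<kappa>ms where "\<kappa>ms = \<alpha>ms * (real C / \<omega>full + (\<Sum>k\<in>{2..K}. M k / \<omega> k))"
  define \<kappa>0 where
    "\<kappa>0 = \<rho> * \<alpha>cyc * (c_cyc + \<alpha>c * real C) / 2 + \<alpha>ms * (real C + (\<Sum>k\<in>{2..K}. M k)) / 2"
  have M_nonneg: "0 \<le> M k" for k unfolding M_def by (simp add: mat_abs_sum_nonneg)
  have "0 \<le> \<kappa>ms" unfolding \<kappa>ms_def using \<alpha>nn(6) \<omega>pos M_nonneg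
    by (intro mult_nonneg_nonneg add_nonneg_nonneg sum_nonneg divide_nonneg_nonneg)
      (simp_all add: less_imp_le)
  moreover have "0 \<le> c_cyc" unfolding c_cyc_def using \<alpha>nn \<open>0 < A\<close> by simp
  moreover have "0 \<le> \<kappa>0" unfolding \<kappa>0_def using \<alpha>nn \<open>0 \<le> \<rho>\<close> \<open>0 \<le> c_cyc\<close> M_nonneg
    by (intro add_nonneg_nonneg divide_nonneg_nonneg mult_nonneg_nonneg sum_nonneg) auto
  moreover have "avg T (\<lambda>t. \<alpha>cyc * mov_avg Win w (A_tilde_cyc C \<alpha>f \<alpha>t \<alpha>g \<alpha>c X Xh Xf Xms g) t
                      + \<alpha>ms * A_ms C K U Tk X Xms Xk Xmsk t)
      \<le> \<kappa>ms * \<epsilon>ms + \<rho> * (\<alpha>cyc * c_cyc) * \<epsilon>cyc + \<rho> * (\<alpha>cyc * \<alpha>c * real C) * \<epsilon>cons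
        + \<rho> * \<alpha>cyc * \<alpha>g * avg T (\<lambda>t. \<bar>g t\<bar>) + \<kappa>0"
    if "L_ms T C K Tk \<omega> \<omega>full X Xms Xk Xmsk \<le> \<epsilon>ms" "L_cyc T C N Wc X Xh Xf \<le> \<epsilon>cyc"
      "L_cons T C Xms Xf \<le> \<epsilon>cons"
    for X Xh Xf Xms Xk Xmsk g \<epsilon>ms \<epsilon>cyc \<epsilon>cons
  proof -
    have sum_eq: "(\<Sum>k\<in>{2..K}. M k * (\<epsilon>ms / \<omega> k + 1/2))
      = \<epsilon>ms * (\<Sum>k\<in>{2..K}. M k / \<omega> k) + (\<Sum>k\<in>{2..K}. M k) / 2"
      by (simp add: sum_distrib_left sum_divide_distrib sum.distrib algebra_simps)
    have "\<alpha>cyc * (\<rho> * (c_cyc * (\<epsilon>cyc + 1/2) + \<alpha>c * real C * (\<epsilon>cons + 1/2)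
                     + \<alpha>g * avg T (\<lambda>t. \<bar>g t\<bar>)))
        + \<alpha>ms * (real C * (\<epsilon>ms / \<omega>full + 1/2) + (\<Sum>k\<in>{2..K}. M k * (\<epsilon>ms / \<omega> k + 1/2)))
      = \<kappa>ms * \<epsilon>ms + \<rho> * (\<alpha>cyc * c_cyc) * \<epsilon>cyc + \<rho> * (\<alpha>cyc * \<alpha>c * real C) * \<epsilon>cons
        + \<rho> * \<alpha>cyc * \<alpha>g * avg T (\<lambda>t. \<bar>g t\<bar>) + \<kappa>0"
      unfolding sum_eq \<kappa>ms_def \<kappa>0_def by (simp add: field_simps)
    then show ?thesis
      using avg_score_le[where U = U and g = g, OF assms that]
      unfolding M_def[symmetric] c_cyc_def[symmetric] by linarith
  qed
  ultimately show ?thesis using \<alpha>nn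
    by (intro exI[of _ \<kappa>ms] exI[of _ "\<alpha>cyc * c_cyc"] exI[of _ "\<alpha>cyc * \<alpha>c * real C"]
        exI[of _ \<alpha>cyc] exI[of _ \<kappa>0]) auto
qed

subsection \<open>Scores bounded from below\<close>

lemma avg_on_A_tilde_cyc_ge:
  assumes "0 \<le> \<alpha>f" "0 \<le> \<alpha>t" "0 \<le> \<alpha>g" "0 \<le> \<alpha>c"
    and "avg_on \<Omega> (row_abs C (arr_diff Xh X)) \<ge> \<delta>t"
      "avg_on \<Omega> (row_abs C (arr_diff Xf X)) \<ge> \<delta>f"
      "avg_on \<Omega> (row_abs C (arr_diff Xms Xf)) \<ge> \<delta>c"
  shows "avg_on \<Omega> (A_tilde_cyc C \<alpha>f \<alpha>t \<alpha>g \<alpha>c X Xh Xf Xms g) \<ge> \<alpha>t * \<delta>t + \<alpha>f * \<delta>f + \<alpha>c * \<delta>c"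
proof -
  have "0 \<le> \<alpha>g * avg_on \<Omega> (\<lambda>t. \<bar>g t\<bar>)" using assms(3) by (simp add: avg_on_nonneg)
  moreover have "\<alpha>t * \<delta>t \<le> \<alpha>t * avg_on \<Omega> (row_abs C (arr_diff Xh X))"
    "\<alpha>f * \<delta>f \<le> \<alpha>f * avg_on \<Omega> (row_abs C (arr_diff Xf X))"
    "\<alpha>c * \<delta>c \<le> \<alpha>c * avg_on \<Omega> (row_abs C (arr_diff Xms Xf))"
    using assms by (simp_all add: mult_left_mono)
  ultimately show ?thesis unfolding avg_on_A_tilde_cyc by linarith
qed

lemma A_tilde_cyc_ge:
  assumes "0 \<le> \<alpha>f" "0 \<le> \<alpha>t" "0 \<le> \<alpha>g" "0 \<le> \<alpha>c"
    and "row_abs C (arr_diff Xh X) s \<ge> \<delta>t" "row_abs C (arr_diff Xf X) s \<ge> \<delta>f"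
      "row_abs C (arr_diff Xms Xf) s \<ge> \<delta>c"
  shows "A_tilde_cyc C \<alpha>f \<alpha>t \<alpha>g \<alpha>c X Xh Xf Xms g s \<ge> \<alpha>t * \<delta>t + \<alpha>f * \<delta>f + \<alpha>c * \<delta>c"
proof -
  have "\<alpha>t * \<delta>t \<le> \<alpha>t * row_abs C (arr_diff Xh X) s" "\<alpha>f * \<delta>f \<le> \<alpha>f * row_abs C (arr_diff Xf X) s"
    "\<alpha>c * \<delta>c \<le> \<alpha>c * row_abs C (arr_diff Xms Xf) s" "0 \<le> \<alpha>g * \<bar>g s\<bar>"
    using assms by (simp_all add: mult_left_mono)
  then show ?thesis unfolding A_tilde_cyc_def by linarith
qed

subsection \<open>Jensen-Shannon divergence and total variation\<close>

lemma ln_one_plus_sub_ln_one_minus_ge: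
  fixes u :: real assumes "0 \<le> u" "u < 1"
  shows "2 * u \<le> ln (1 + u) - ln (1 - u)"
proof -
  let ?f = "\<lambda>x::real. ln (1 + x) - ln (1 - x) - 2 * x"
  have "?f 0 \<le> ?f u"
  proof (rule DERIV_nonneg_imp_increasing_open[OF assms(1)])
    fix x :: real assume x: "0 < x" "x < u"
    then have "DERIV ?f x :> 1 / (1 + x) + 1 / (1 - x) - 2"
      using assms by (auto intro!: derivative_eq_intros)
    moreover have "1 / (1 + x) + 1 / (1 - x) - 2 = 2 * x\<^sup>2 / ((1 + x) * (1 - x))"
      using x assms by (simp add: divide_simps power2_eq_square) (simp add: algebra_simps)
    moreover have "0 \<le> 2 * x\<^sup>2 / ((1 + x) * (1 - x))"
      using x assms by (intro divide_nonneg_pos) auto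
    ultimately show "\<exists>y. DERIV ?f x :> y \<and> 0 \<le> y" by auto
  qed (use assms in \<open>auto intro!: continuous_intros\<close>)
  then show ?thesis by simp
qed

lemma square_le_xlnx_sum:
  fixes u :: real assumes "0 \<le> u" "u < 1"
  shows "u\<^sup>2 \<le> (1 + u) * ln (1 + u) + (1 - u) * ln (1 - u)"
proof -
  let ?f = "\<lambda>x::real. (1 + x) * ln (1 + x) + (1 - x) * ln (1 - x) - x\<^sup>2"
  have "?f 0 \<le> ?f u"
  proof (rule DERIV_nonneg_imp_increasing_open[OF assms(1)])
    fix x :: real assume x: "0 < x" "x < u"
    then have "DERIV ?f x :> ln (1 + x) - ln (1 - x) - 2 * x"
      using assms by (auto intro!: derivative_eq_intros)
    moreover have "0 \<le> ln (1 + x) - ln (1 - x) - 2 * x"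
      using ln_one_plus_sub_ln_one_minus_ge[of x] x assms by simp
    ultimately show "\<exists>y. DERIV ?f x :> y \<and> 0 \<le> y" by blast
  qed (use assms in \<open>auto intro!: continuous_intros\<close>)
  then show ?thesis by simp
qed

definition js_term :: "real \<Rightarrow> real \<Rightarrow> real" where
  "js_term a b = (if a = 0 then 0 else a * ln (a / ((a + b) / 2))) / 2
               + (if b = 0 then 0 else b * ln (b / ((a + b) / 2))) / 2"

lemma JS_eq_sum_js_term: "JS S p q = (\<Sum>x\<in>S. js_term (p x) (q x))"
  by (simp add: JS_def KL_def js_term_def Let_def sum_divide_distrib sum.distrib)

lemma js_term_commute: "js_term a b = js_term b a"
  unfolding js_term_def by (simp add: add.commute)

lemma js_term_ge_ordered:
  fixes a b :: real assumes "0 \<le> b" "b \<le> a"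
  shows "(a - b)\<^sup>2 / (a + b) \<le> 4 * js_term a b"
proof (cases "b = 0")
  case True
  have "1 \<le> 2 * ln (2 :: real)"
    using ln_one_minus_pos_upper_bound[of "1/2"] by (simp add: ln_div)
  then show ?thesis using True assms by (simp add: js_term_def power2_eq_square)
next
  case False
  then have "0 < b" "0 < a" using assms by auto
  define u where "u = (a - b) / (a + b)"
  have u: "0 \<le> u" "u < 1" using \<open>0 < b\<close> assms by (auto simp: u_def field_simps)
  have "(a - b)\<^sup>2 / (a + b) = (a + b) * u\<^sup>2"
    using \<open>0 < b\<close> assms by (simp add: u_def power_divide power2_eq_square)
  also have "\<dots> \<le> (a + b) * ((1 + u) * ln (1 + u) + (1 - u) * ln (1 - u))"
    using square_le_xlnx_sum[OF u] assms by (intro mult_left_mono) auto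
  also have "\<dots> = (a + b) * (1 + u) * ln (1 + u) + (a + b) * (1 - u) * ln (1 - u)"
    by (simp only: distrib_left[of "a + b" "(1 + u) * ln (1 + u)"] mult.assoc)
  also have "\<dots> = 4 * js_term a b"
  proof -
    have weights: "(a + b) * (1 + u) = 2 * a" "(a + b) * (1 - u) = 2 * b"
      and ratios: "1 + u = a / ((a + b) / 2)" "1 - u = b / ((a + b) / 2)"
      using \<open>0 < b\<close> assms by (auto simp: u_def field_simps)
    show ?thesis using \<open>0 < a\<close> \<open>0 < b\<close> unfolding weights unfolding ratios js_term_def by simp
  qed
  finally show ?thesis .
qed

lemma js_term_ge:
  fixes a b :: real assumes "0 \<le> a" "0 \<le> b"
  shows "(a - b)\<^sup>2 / (a + b) \<le> 4 * js_term a b"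
  using js_term_ge_ordered[of b a] js_term_ge_ordered[of a b] assms
  by (cases "b \<le> a") (auto simp: js_term_commute power2_commute add.commute)

lemma JS_ge_l1dist_sq:
  assumes "finite S" "prob_vec S p" "prob_vec S q"
  shows "(l1dist S p q)\<^sup>2 / 8 \<le> JS S p q"
proof -
  have pq: "\<forall>x\<in>S. 0 \<le> p x \<and> 0 \<le> q x" "(\<Sum>x\<in>S. p x + q x) = 2"
    using assms(2,3) by (auto simp: prob_vec_def sum.distrib)
  define f where "f x = \<bar>p x - q x\<bar> / sqrt (p x + q x)" for x
  define h where "h x = sqrt (p x + q x)" for x
  have "f x * h x = \<bar>p x - q x\<bar>" if "x \<in> S" for x
    using pq(1) that by (cases "p x + q x = 0") (auto simp: f_def h_def)
  then have "(l1dist S p q)\<^sup>2 = (\<Sum>x\<in>S. f x * h x)\<^sup>2"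
    unfolding l1dist_def by simp
  also have "\<dots> \<le> (\<Sum>x\<in>S. (f x)\<^sup>2) * (\<Sum>x\<in>S. (h x)\<^sup>2)"
    by (rule Cauchy_Schwarz_ineq_sum)
  also have "\<dots> = (\<Sum>x\<in>S. (p x - q x)\<^sup>2 / (p x + q x)) * 2"
    using pq by (simp add: f_def h_def power_divide)
  also have "\<dots> \<le> (\<Sum>x\<in>S. 4 * js_term (p x) (q x)) * 2"
    using pq(1) by (intro mult_right_mono sum_mono js_term_ge) auto
  finally show ?thesis by (simp add: JS_eq_sum_js_term sum_distrib_left[symmetric])
qed

lemma avg_on_JS_ge:
  assumes "finite S" "finite \<Omega>" "\<Omega> \<noteq> {}" "0 \<le> \<delta>p"
    and "\<forall>t\<in>\<Omega>. prob_vec S (pt t) \<and> prob_vec S (pf t) \<and> l1dist S (pt t) (pf t) \<ge> \<delta>p"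
  shows "avg_on \<Omega> (\<lambda>t. JS S (pt t) (pf t)) \<ge> \<delta>p\<^sup>2 / 8"
proof (rule avg_on_ge_const[OF assms(2,3)])
  fix t assume "t \<in> \<Omega>"
  then have "\<delta>p\<^sup>2 \<le> (l1dist S (pt t) (pf t))\<^sup>2"
    using assms(4,5) by (intro power_mono) auto
  then show "\<delta>p\<^sup>2 / 8 \<le> JS S (pt t) (pf t)"
    using JS_ge_l1dist_sq[of S "pt t" "pf t"] assms(1,5) \<open>t \<in> \<Omega>\<close> by simp
qed

theorem lemma3:
  fixes T C K N :: nat
    and Tk :: "nat \<Rightarrow> nat"
    and Wc :: "nat \<Rightarrow> nat \<Rightarrow> nat \<Rightarrow> real"
    and A B :: real
    and U :: "nat \<Rightarrow> nat \<Rightarrow> nat \<Rightarrow> real"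
    and Win :: "nat \<Rightarrow> nat set"
    and w :: "nat \<Rightarrow> nat \<Rightarrow> real"
    and \<rho> :: real
    and \<alpha>f \<alpha>t \<alpha>g \<alpha>c \<alpha>cyc \<alpha>ms \<omega>full :: real
    and \<omega> :: "nat \<Rightarrow> real"
  assumes T1: "T \<ge> 1" and C1: "C \<ge> 1" and K1: "K \<ge> 1"
    and Tk1: "\<forall>k\<in>{2..K}. Tk k \<ge> 1"
    and AB: "0 < A" "A \<le> B"
    and frame: "\<forall>Y. sqrt A * frob T C Y \<le> vnorm N (lin_map Wc T C Y)
                     \<and> vnorm N (lin_map Wc T C Y) \<le> sqrt B * frob T C Y"
    and win: "\<forall>t\<in>{1..T}. Win t \<subseteq> {1..T}"
    and wnn: "\<forall>t\<in>{1..T}. \<forall>s\<in>Win t. 0 \<le> w t s"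
    and wsum: "\<forall>t\<in>{1..T}. (\<Sum>s\<in>Win t. w t s) = 1"
    and \<rho>1: "\<rho> \<ge> 1"
    and \<rho>: "\<forall>u. (\<forall>t\<in>{1..T}. 0 \<le> u t) \<longrightarrow> avg T (mov_avg Win w u) \<le> \<rho> * avg T u"
    and \<alpha>nn: "0 \<le> \<alpha>f" "0 \<le> \<alpha>t" "0 \<le> \<alpha>g" "0 \<le> \<alpha>c" "0 \<le> \<alpha>cyc" "0 \<le> \<alpha>ms"
    and \<omega>pos: "\<forall>k\<in>{2..K}. 0 < \<omega> k" "0 < \<omega>full"
    and \<omega>sum: "(\<Sum>k\<in>{2..K}. \<omega> k) + \<omega>full = 1"
  shows
    "(\<exists>\<kappa>ms \<kappa>cyc \<kappa>cons \<kappa>g \<kappa>0 :: real.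
        0 \<le> \<kappa>ms \<and> 0 \<le> \<kappa>cyc \<and> 0 \<le> \<kappa>cons \<and> 0 \<le> \<kappa>g \<and> 0 \<le> \<kappa>0 \<and>
        (\<forall>(X :: nat \<Rightarrow> nat \<Rightarrow> real) Xh Xf Xms (Xk :: nat \<Rightarrow> nat \<Rightarrow> nat \<Rightarrow> real) Xmsk
           (g :: nat \<Rightarrow> real) \<epsilon>ms \<epsilon>cyc \<epsilon>cons.
           L_ms T C K Tk \<omega> \<omega>full X Xms Xk Xmsk \<le> \<epsilon>ms \<and>
           L_cyc T C N Wc X Xh Xf \<le> \<epsilon>cyc \<and>
           L_cons T C Xms Xf \<le> \<epsilon>cons \<longrightarrow>
           avg T (\<lambda>t. \<alpha>cyc * mov_avg Win w (A_tilde_cyc C \<alpha>f \<alpha>t \<alpha>g \<alpha>c X Xh Xf Xms g) t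
                      + \<alpha>ms * A_ms C K U Tk X Xms Xk Xmsk t)
             \<le> \<kappa>ms * \<epsilon>ms + \<rho> * \<kappa>cyc * \<epsilon>cyc + \<rho> * \<kappa>cons * \<epsilon>cons
                + \<rho> * \<kappa>g * \<alpha>g * avg T (\<lambda>t. \<bar>g t\<bar>) + \<kappa>0))
     \<and>
     (\<forall>(X :: nat \<Rightarrow> nat \<Rightarrow> real) Xh Xf Xms (g :: nat \<Rightarrow> real) \<Omega> \<delta>t \<delta>f \<delta>c.
        \<Omega> \<subseteq> {1..T} \<and> \<Omega> \<noteq> {} \<and>
        avg_on \<Omega> (row_abs C (arr_diff Xh X)) \<ge> \<delta>t \<and>
        avg_on \<Omega> (row_abs C (arr_diff Xf X)) \<ge> \<delta>f \<and>
        avg_on \<Omega> (row_abs C (arr_diff Xms Xf)) \<ge> \<delta>c \<longrightarrow>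
        avg_on \<Omega> (A_tilde_cyc C \<alpha>f \<alpha>t \<alpha>g \<alpha>c X Xh Xf Xms g) \<ge> \<alpha>t * \<delta>t + \<alpha>f * \<delta>f + \<alpha>c * \<delta>c)
     \<and>
     (\<forall>(X :: nat \<Rightarrow> nat \<Rightarrow> real) Xh Xf Xms (g :: nat \<Rightarrow> real) \<Omega> \<delta>t \<delta>f \<delta>c.
        \<Omega> \<subseteq> {1..T} \<and> \<Omega> \<noteq> {} \<and>
        (\<forall>t\<in>\<Omega>. row_abs C (arr_diff Xh X) t \<ge> \<delta>t \<and>
                 row_abs C (arr_diff Xf X) t \<ge> \<delta>f \<and>
                 row_abs C (arr_diff Xms Xf) t \<ge> \<delta>c) \<longrightarrow>
        (\<forall>t\<in>\<Omega>. Win t \<subseteq> \<Omega> \<longrightarrow>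
           mov_avg Win w (A_tilde_cyc C \<alpha>f \<alpha>t \<alpha>g \<alpha>c X Xh Xf Xms g) t
             \<ge> \<alpha>t * \<delta>t + \<alpha>f * \<delta>f + \<alpha>c * \<delta>c))
     \<and>
     (\<forall>(S :: 'a set) (pt :: nat \<Rightarrow> 'a \<Rightarrow> real) pf \<Omega> \<delta>p.
        finite S \<and> \<Omega> \<subseteq> {1..T} \<and> \<Omega> \<noteq> {} \<and> 0 \<le> \<delta>p \<and>
        (\<forall>t\<in>\<Omega>. prob_vec S (pt t) \<and> prob_vec S (pf t) \<and> l1dist S (pt t) (pf t) \<ge> \<delta>p) \<longrightarrow>
        avg_on \<Omega> (\<lambda>t. JS S (pt t) (pf t)) \<ge> \<delta>p\<^sup>2 / 8)"
proof (intro conjI allI impI ballI, goal_cases)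
  case 1
  have "\<forall>Y. sqrt A * frob T C Y \<le> vnorm N (lin_map Wc T C Y)" using frame by blast
  then show ?case using score_avg_bound[OF AB(1) _ \<rho> _ \<alpha>nn \<omega>pos] \<rho>1 by simp
next
  case (2 X Xh Xf Xms g \<Omega> \<delta>t \<delta>f \<delta>c)
  then show ?case using avg_on_A_tilde_cyc_ge[OF \<alpha>nn(1-4)] by blast
next
  case (3 X Xh Xf Xms g \<Omega> \<delta>t \<delta>f \<delta>c t)
  then have "t \<in> {1..T}" by blast
  then show ?case
    using 3 wnn wsum A_tilde_cyc_ge[OF \<alpha>nn(1-4)] by (intro mov_avg_ge) blast+
next
  case (4 S pt pf \<Omega> \<delta>p)
  then show ?case using avg_on_JS_ge[of S \<Omega>] finite_subset[of \<Omega> "{1..T}"] by blast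
qed

end
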